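(* Let $n\geq 2$ and for $1\le i,j\le n$ let $\Omega_{ij}=E_{ij}-E_{ji}\in\mathfrak{so}(n)$, where $E_{ij}$ is the matrix with $1$ in entry $(i,j)$ and $0$ elsewhere. Given index pairs $(i_0,j_0),\dots,(i_m,j_m)$ with $i_k\neq j_k$, consider the system on $\mathbb{S}^{n-1}$ \[ \dot x(t)=\Bigl(\Omega_{i_0j_0}+\sum_{k=1}^m u_k(t)\Omega_{i_kj_k}\Bigr)x(t),\qquad x(0)\in\mathbb{S}^{n-1}. \] Let $\mathcal{G}=(\mathcal{V},\mathcal{E})$ be the graph with vertex set $\mathcal{V}=\{v_1,\dots,v_n\}$ and edge set $\mathcal{E}=\{v_{i_0}v_{j_0},\dots,v_{i_m}v_{j_m}\}$. Then the system is controllable on $\mathbb{S}^{n-1}$ if and only if $\mathcal{G}$ is connected. *)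

theory Defs
  imports "HOL-Analysis.Analysis"
begin

definition Omega :: "'n::finite \<Rightarrow> 'n \<Rightarrow> real^'n^'n" where
  "Omega i j = (\<chi> a b. (if a = i \<and> b = j then 1 else 0) - (if a = j \<and> b = i then 1 else 0))"

text \<open>Index pairs are the list ps = [(i_0,j_0),...,(i_m,j_m)], so m = length ps - 1.
  For a control value v (v k is u_k, k = 1..m) the system matrix is
  Omega_{i_0 j_0} + sum_{k=1}^m v k * Omega_{i_k j_k}.\<close>
definition sys_matrix :: "('n::finite \<times> 'n) list \<Rightarrow> (nat \<Rightarrow> real) \<Rightarrow> real^'n^'n" where
  "sys_matrix ps v = Omega (fst (ps!0)) (snd (ps!0))
     + (\<Sum>k\<in>{1..<length ps}. v k *\<^sub>R Omega (fst (ps!k)) (snd (ps!k)))"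

text \<open>Admissible controls: piecewise constant on [0,T] (locally constant off a finite set).\<close>
definition piecewise_constant_on :: "real \<Rightarrow> (real \<Rightarrow> 'a) \<Rightarrow> bool" where
  "piecewise_constant_on T u \<longleftrightarrow>
     (\<exists>S. finite S \<and> (\<forall>t\<in>{0..T} - S. eventually (\<lambda>s. u s = u t) (at t)))"

definition is_trajectory ::
  "('n::finite \<times> 'n) list \<Rightarrow> real \<Rightarrow> (real \<Rightarrow> nat \<Rightarrow> real) \<Rightarrow> (real \<Rightarrow> real^'n) \<Rightarrow> bool" where
  "is_trajectory ps T u x \<longleftrightarrow> continuous_on {0..T} x \<and>
     (\<exists>S. finite S \<and> (\<forall>t\<in>{0<..<T} - S.
        (x has_vector_derivative (sys_matrix ps (u t) *v x t)) (at t)))"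

definition reachable :: "('n::finite \<times> 'n) list \<Rightarrow> real^'n \<Rightarrow> real^'n \<Rightarrow> bool" where
  "reachable ps x0 x1 \<longleftrightarrow> (\<exists>T u x. T \<ge> 0 \<and> piecewise_constant_on T u \<and>
      is_trajectory ps T u x \<and> x 0 = x0 \<and> x T = x1)"

definition controllable_on_sphere :: "('n::finite \<times> 'n) list \<Rightarrow> bool" where
  "controllable_on_sphere ps \<longleftrightarrow>
     (\<forall>x0 x1::real^'n. norm x0 = 1 \<longrightarrow> norm x1 = 1 \<longrightarrow> reachable ps x0 x1)"

definition graph_connected :: "('n \<times> 'n) list \<Rightarrow> bool" where
  "graph_connected ps \<longleftrightarrow> (\<forall>v w. (v, w) \<in> (set ps \<union> (set ps)\<inverse>)\<^sup>*)"

end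

theory Submission
  imports Defs
begin

(*
  Necessity: if the graph is disconnected, let D be the set of vertices not connected to
  some vertex v. No edge joins D to its complement, so x^T P_D Omega_ij x = 0 for every edge
  and the mass sum_{a in D} x_a^2 is conserved along trajectories: e_v cannot reach e_w
  for w in D.

  Sufficiency: call the coordinate plane (a,b) rotatable if all rotations in it are
  reachable. Constant controls give matrices A with A^3 = -w^2 A, whose flows are explicit
  (Rodrigues' formula). The drift rotates the plane of edge 0. A disjoint edge is rotated by
  the flow of Omega_0 + Omega_k once its turn in the plane of edge 0 is undone; for an edge
  sharing a vertex with edge 0, two half-period flows compose to a rotation with freely
  chosen angle in the plane of the two outer vertices. Conjugation by quarter turns chains
  rotatable planes along paths, so in a connected graph every plane (r,w) is rotatable, and
  Givens rotations carry any unit vector to e_r and back.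
*)

lemma Omega_mult_vec_nth:
  "(Omega i j *v x) $ a = (if a = i then x $ j else 0) - (if a = j then x $ i else 0)"
proof -
  have "(Omega i j *v x) $ a = (\<Sum>b\<in>UNIV. (if a = i \<and> b = j then x $ b else 0))
      - (\<Sum>b\<in>UNIV. (if a = j \<and> b = i then x $ b else 0))"
    by (simp add: matrix_vector_mult_def Omega_def left_diff_distrib sum_subtractf
        if_distrib[where f="\<lambda>z. z * _"] cong: if_cong)
  then show ?thesis
    by (simp add: sum.If_cases)
qed

lemma Omega_swap: "Omega j i = - Omega i j"
  by (auto simp add: Omega_def vec_eq_iff)

lemma sys_matrix_single_control:
  assumes "k \<in> {1..<length ps}"
  shows "sys_matrix ps (\<lambda>j. if j = k then c else 0) =
     Omega (fst (ps!0)) (snd (ps!0)) + c *\<^sub>R Omega (fst (ps!k)) (snd (ps!k))"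
  using assms by (simp add: sys_matrix_def if_distrib[where f="\<lambda>z. z *\<^sub>R _"] cong: if_cong)

lemma sys_matrix_zero_control: "sys_matrix ps (\<lambda>j. 0) = Omega (fst (ps!0)) (snd (ps!0))"
  by (simp add: sys_matrix_def)

lemma reachable_refl: "reachable ps x x"
  unfolding reachable_def
  by (rule exI[of _ 0], rule exI[of _ "\<lambda>_ _. 0"], rule exI[of _ "\<lambda>_. x"])
     (auto simp: piecewise_constant_on_def is_trajectory_def)

lemma notin_image_plus_diff: "(t::real) \<notin> (+) c ` S \<Longrightarrow> t - c \<notin> S"
  using image_eqI[of t "(+) c" "t - c" S] by auto

lemma piecewise_constant_on_join:
  assumes "piecewise_constant_on T1 u1" "piecewise_constant_on T2 u2"
  shows "piecewise_constant_on (T1 + T2) (\<lambda>t. if t \<le> T1 then u1 t else u2 (t - T1))"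
    (is "piecewise_constant_on _ ?u")
proof -
  obtain S1 where S1: "finite S1" "\<And>t. t \<in> {0..T1} - S1 \<Longrightarrow> eventually (\<lambda>s. u1 s = u1 t) (at t)"
    using assms(1) unfolding piecewise_constant_on_def by blast
  obtain S2 where S2: "finite S2" "\<And>t. t \<in> {0..T2} - S2 \<Longrightarrow> eventually (\<lambda>s. u2 s = u2 t) (at t)"
    using assms(2) unfolding piecewise_constant_on_def by blast
  have "eventually (\<lambda>s. ?u s = ?u t) (at t)" if t: "t \<in> {0..T1 + T2} - (S1 \<union> (+) T1 ` S2 \<union> {T1})" for t
  proof (cases "t < T1")
    case True
    with t have "eventually (\<lambda>s. u1 s = u1 t) (at t)" by (intro S1(2)) auto
    with order_tendstoD(2)[OF tendsto_ident_at True] show ?thesis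
      by eventually_elim (use True in auto)
  next
    case False
    with t have gt: "T1 < t" by auto
    from t gt have "eventually (\<lambda>s. u2 s = u2 (t - T1)) (at (t - T1))"
      by (intro S2(2)) (auto dest: notin_image_plus_diff)
    then have "eventually (\<lambda>s. u2 (s - T1) = u2 (t - T1)) (at t)"
      unfolding filtermap_at_shift[symmetric] eventually_filtermap .
    with order_tendstoD(1)[OF tendsto_ident_at gt] show ?thesis
      by eventually_elim (use gt in auto)
  qed
  then show ?thesis
    unfolding piecewise_constant_on_def using S1(1) S2(1)
    by (intro exI[of _ "S1 \<union> (+) T1 ` S2 \<union> {T1}"]) auto
qed

lemma is_trajectory_join:
  assumes "is_trajectory ps T1 u1 x1" "is_trajectory ps T2 u2 x2" "x1 T1 = x2 0"
  shows "is_trajectory ps (T1 + T2) (\<lambda>t. if t \<le> T1 then u1 t else u2 (t - T1))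
      (\<lambda>t. if t \<le> T1 then x1 t else x2 (t - T1))"
    (is "is_trajectory _ _ ?u ?x")
proof -
  obtain R1 where R1: "finite R1" "continuous_on {0..T1} x1"
     "\<And>t. t \<in> {0<..<T1} - R1 \<Longrightarrow> (x1 has_vector_derivative (sys_matrix ps (u1 t) *v x1 t)) (at t)"
    using assms(1) unfolding is_trajectory_def by blast
  obtain R2 where R2: "finite R2" "continuous_on {0..T2} x2"
     "\<And>t. t \<in> {0<..<T2} - R2 \<Longrightarrow> (x2 has_vector_derivative (sys_matrix ps (u2 t) *v x2 t)) (at t)"
    using assms(2) unfolding is_trajectory_def by blast
  have "continuous_on {0..T1 + T2} ?x"
  proof (rule continuous_on_cases_le[where h="\<lambda>t. t"])
    show "continuous_on {t \<in> {0..T1 + T2}. t \<le> T1} x1"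
      by (rule continuous_on_subset[OF R1(2)]) auto
    show "continuous_on {t \<in> {0..T1 + T2}. T1 \<le> t} (\<lambda>t. x2 (t - T1))"
      by (rule continuous_on_compose2[OF R2(2)]) (auto intro!: continuous_intros)
  qed (use assms(3) in \<open>auto intro: continuous_on_id\<close>)
  moreover have "(?x has_vector_derivative (sys_matrix ps (?u t) *v ?x t)) (at t)"
    if t: "t \<in> {0<..<T1 + T2} - (R1 \<union> (+) T1 ` R2 \<union> {T1})" for t
  proof (cases "t < T1")
    case True
    with t have "(x1 has_vector_derivative (sys_matrix ps (?u t) *v ?x t)) (at t)"
      by (auto intro: R1(3))
    then show ?thesis
      by (rule has_vector_derivative_transform_within_open[where S="{..<T1}"]) (use True in auto)
  next
    case False
    with t have gt: "T1 < t" by auto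
    from t gt have "(x2 has_vector_derivative (sys_matrix ps (?u t) *v ?x t)) (at (t - T1))"
      by (auto intro!: R2(3) dest: notin_image_plus_diff)
    moreover have "((\<lambda>s. s - T1) has_vector_derivative 1) (at t)"
      by (auto intro!: derivative_eq_intros)
    ultimately have "((\<lambda>s. x2 (s - T1)) has_vector_derivative (sys_matrix ps (?u t) *v ?x t)) (at t)"
      using vector_diff_chain_at by (fastforce simp: o_def)
    then show ?thesis
      by (rule has_vector_derivative_transform_within_open[where S="{T1<..}"]) (use gt in auto)
  qed
  ultimately show ?thesis
    unfolding is_trajectory_def using R1(1) R2(1)
    by (intro conjI exI[of _ "R1 \<union> (+) T1 ` R2 \<union> {T1}"]) auto
qed

lemma reachable_trans [trans]:
  assumes "reachable ps x y" "reachable ps y z"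
  shows "reachable ps x z"
proof -
  obtain T1 u1 x1 where 1: "T1 \<ge> 0" "piecewise_constant_on T1 u1" "is_trajectory ps T1 u1 x1"
      "x1 0 = x" "x1 T1 = y"
    using assms(1) unfolding reachable_def by blast
  obtain T2 u2 x2 where 2: "T2 \<ge> 0" "piecewise_constant_on T2 u2" "is_trajectory ps T2 u2 x2"
      "x2 0 = y" "x2 T2 = z"
    using assms(2) unfolding reachable_def by blast
  show ?thesis
    unfolding reachable_def
    using 1 2 piecewise_constant_on_join[OF 1(2) 2(2)] is_trajectory_join[OF 1(3) 2(3)]
    by (intro exI[of _ "T1 + T2"]) fastforce
qed

section \<open>Flows of constant controls\<close>

text \<open>For \<open>A\<^sup>3 = -w\<^sup>2 A\<close> this is \<open>exp (t A) x\<close> (Rodrigues' formula).\<close>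

definition rodrigues :: "real^'n^'n \<Rightarrow> real \<Rightarrow> real \<Rightarrow> real^'n \<Rightarrow> real^'n" where
  "rodrigues A w t x =
     x + (sin (w * t) / w) *\<^sub>R (A *v x) + ((1 - cos (w * t)) / w\<^sup>2) *\<^sub>R (A *v (A *v x))"

lemma rodrigues_nth:
  "rodrigues A w t x $ m =
     x $ m + sin (w * t) / w * (A *v x) $ m + (1 - cos (w * t)) / w\<^sup>2 * (A *v (A *v x)) $ m"
  by (simp add: rodrigues_def)

lemma rodrigues_half_period:
  assumes "w \<noteq> 0"
  shows "rodrigues A w (pi / w) x = x + (2 / w\<^sup>2) *\<^sub>R (A *v (A *v x))"
  using assms by (simp add: rodrigues_def)

context
  fixes A :: "real^'n::finite^'n" and w :: real
  assumes cube: "\<And>y. A *v (A *v (A *v y)) = - (w\<^sup>2 *\<^sub>R (A *v y))" and w_pos: "w > 0"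
begin

lemma mult_vec_rodrigues:
  "A *v rodrigues A w t x = cos (w * t) *\<^sub>R (A *v x) + (sin (w * t) / w) *\<^sub>R (A *v (A *v x))"
  using w_pos
  by (simp add: rodrigues_def matrix_vector_right_distrib matrix_vector_mult_scaleR cube scaleR_diff_left)

lemma has_vector_derivative_rodrigues:
  "((\<lambda>t. rodrigues A w t x) has_vector_derivative (A *v rodrigues A w t x)) (at t)"
proof -
  have "((\<lambda>t. sin (w * t) / w) has_real_derivative cos (w * t)) (at t)"
    using w_pos by (auto intro!: derivative_eq_intros)
  moreover have "((\<lambda>t. (1 - cos (w * t)) / w\<^sup>2) has_real_derivative sin (w * t) / w) (at t)"
    using w_pos by (auto intro!: derivative_eq_intros simp: power2_eq_square)
  ultimately have "((\<lambda>t. rodrigues A w t x) has_vector_derivative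
      0 + ((sin (w * t) / w) *\<^sub>R 0 + cos (w * t) *\<^sub>R (A *v x))
        + (((1 - cos (w * t)) / w\<^sup>2) *\<^sub>R 0 + (sin (w * t) / w) *\<^sub>R (A *v (A *v x)))) (at t)"
    unfolding rodrigues_def
    by (intro has_vector_derivative_add has_vector_derivative_scaleR has_vector_derivative_const)
  then show ?thesis
    by (simp add: mult_vec_rodrigues)
qed

lemma reachable_rodrigues:
  assumes "sys_matrix ps v = A" "t \<ge> 0"
  shows "reachable ps x (rodrigues A w t x)"
  unfolding reachable_def
proof (intro exI conjI)
  show "piecewise_constant_on t (\<lambda>_. v)"
    unfolding piecewise_constant_on_def by (intro exI[of _ "{}"]) auto
  have "((\<lambda>s. rodrigues A w s x) has_vector_derivative (A *v rodrigues A w s x)) (at s within S)" for s S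
    by (rule has_vector_derivative_at_within[OF has_vector_derivative_rodrigues])
  then show "is_trajectory ps t (\<lambda>_. v) (\<lambda>s. rodrigues A w s x)"
    unfolding is_trajectory_def assms(1)
    by (intro conjI exI[of _ "{}"] continuous_on_vector_derivative ballI) auto
  show "rodrigues A w 0 x = x"
    by (simp add: rodrigues_def)
qed (use assms(2) in auto)

end

section \<open>Rotations in coordinate planes\<close>

definition givens :: "'n \<Rightarrow> 'n \<Rightarrow> real \<Rightarrow> real \<Rightarrow> real^'n \<Rightarrow> real^'n" where
  "givens a b c s x = (\<chi> m. if m = a then c * x $ a - s * x $ b
     else if m = b then s * x $ a + c * x $ b else x $ m)"

lemma givens_nth:
  "givens a b c s x $ m = (if m = a then c * x $ a - s * x $ b
     else if m = b then s * x $ a + c * x $ b else x $ m)"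
  by (simp add: givens_def)

lemma givens_inverse:
  assumes "c\<^sup>2 + s\<^sup>2 = 1" "a \<noteq> b"
  shows "givens a b c (- s) (givens a b c s x) = x"
proof -
  have "c * c + s * s = 1" using assms(1) by (simp add: power2_eq_square)
  then have "c * (c * p - s * q) + s * (s * p + c * q) = p"
      "c * (s * p + c * q) - s * (c * p - s * q) = q" for p q
    by algebra+
  then show ?thesis
    using assms(2) by (simp add: vec_eq_iff givens_nth)
qed

lemma givens_swap: "a \<noteq> b \<Longrightarrow> givens b a c s = givens a b c (- s)"
  by (auto simp: fun_eq_iff vec_eq_iff givens_nth)

definition rotatable :: "('n::finite \<times> 'n) list \<Rightarrow> 'n \<Rightarrow> 'n \<Rightarrow> bool" where
  "rotatable ps a b \<longleftrightarrow> a \<noteq> b \<and> (\<forall>c s x. c\<^sup>2 + s\<^sup>2 = 1 \<longrightarrow> reachable ps x (givens a b c s x))"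

lemma rotatable_reachable:
  assumes "rotatable ps a b" "c\<^sup>2 + s\<^sup>2 = 1"
  shows "reachable ps x (givens a b c s x)" "reachable ps (givens a b c s x) x"
proof -
  show "reachable ps x (givens a b c s x)"
    using assms unfolding rotatable_def by blast
  have "reachable ps (givens a b c s x) (givens a b c (- s) (givens a b c s x))"
    using assms unfolding rotatable_def by simp
  then show "reachable ps (givens a b c s x) x"
    using assms by (simp add: givens_inverse rotatable_def)
qed

lemma rotatable_sym: "rotatable ps a b \<Longrightarrow> rotatable ps b a"
  by (auto simp: rotatable_def givens_swap)

lemma rotatable_trans:
  assumes ab: "rotatable ps a b" and bc: "rotatable ps b c" and "a \<noteq> c"
  shows "rotatable ps a c"
  unfolding rotatable_def
proof (intro conjI allI impI)
  fix cs sn :: real and x assume unit: "cs\<^sup>2 + sn\<^sup>2 = 1"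
  have "a \<noteq> b" "b \<noteq> c" using ab bc by (auto simp: rotatable_def)
  \<comment> \<open>conjugating by a quarter turn in the (b,c)-plane carries the (a,b)-plane onto the (a,c)-plane\<close>
  then have conj: "givens a c cs sn x = givens b c 0 (-1) (givens a b cs (- sn) (givens b c 0 1 x))"
    using \<open>a \<noteq> c\<close> by (auto simp: vec_eq_iff givens_nth)
  have "reachable ps x (givens b c 0 1 x)"
    using rotatable_reachable(1)[OF bc] by simp
  also have "reachable ps \<dots> (givens a b cs (- sn) (givens b c 0 1 x))"
    using rotatable_reachable(1)[OF ab] unit by simp
  also have "reachable ps \<dots> (givens a c cs sn x)"
    unfolding conj using rotatable_reachable(1)[OF bc] by simp
  finally show "reachable ps x (givens a c cs sn x)" .
qed (fact \<open>a \<noteq> c\<close>)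

lemma rotatableI_angle:
  assumes "a \<noteq> b"
    and rot: "\<And>t x. 0 \<le> t \<Longrightarrow> t \<le> 2 * pi \<Longrightarrow> reachable ps x (givens a b (cos t) (- sin t) x)"
  shows "rotatable ps a b"
  unfolding rotatable_def
proof (intro conjI allI impI)
  fix c s :: real and x assume "c\<^sup>2 + s\<^sup>2 = 1"
  then obtain t where "0 \<le> t" "t \<le> 2 * pi" "c = cos t" "- s = sin t"
    using sincos_total_2pi_le[of c "- s"] by auto
  then show "reachable ps x (givens a b c s x)"
    using rot[of t x] by (simp add: minus_equation_iff[of s])
qed (fact \<open>a \<noteq> b\<close>)

section \<open>Every edge spans a rotatable plane\<close>

lemma rodrigues_Omega:
  assumes "a \<noteq> b"
  shows "rodrigues (Omega a b) 1 t x = givens a b (cos t) (- sin t) x"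
  using assms by (auto simp: vec_eq_iff rodrigues_nth givens_nth Omega_mult_vec_nth algebra_simps)

lemma rotatable_if_drift:
  assumes "sys_matrix ps v = Omega a b" "a \<noteq> b"
  shows "rotatable ps a b"
proof (rule rotatableI_angle[OF assms(2)])
  fix t :: real and x assume "0 \<le> t"
  have "\<And>y. Omega a b *v (Omega a b *v (Omega a b *v y)) = - (1\<^sup>2 *\<^sub>R (Omega a b *v y))"
    using assms(2) by (simp add: vec_eq_iff Omega_mult_vec_nth)
  from reachable_rodrigues[OF this zero_less_one assms(1) \<open>0 \<le> t\<close>]
  show "reachable ps x (givens a b (cos t) (- sin t) x)"
    by (simp add: rodrigues_Omega assms(2))
qed

lemma rotatable_disjoint_edge:
  assumes ctrl: "sys_matrix ps v = Omega a b + Omega p q" and ab: "rotatable ps a b"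
    and "p \<noteq> q" "p \<notin> {a, b}" "q \<notin> {a, b}"
  shows "rotatable ps p q"
proof (rule rotatableI_angle[OF \<open>p \<noteq> q\<close>])
  fix t :: real and x assume "0 \<le> t"
  let ?A = "Omega a b + Omega p q"
  have "a \<noteq> b" using ab by (simp add: rotatable_def)
  have nth: "(?A *v y) $ m = (Omega a b *v y) $ m + (Omega p q *v y) $ m" for y m
    by (simp add: matrix_vector_mult_add_rdistrib)
  have cube: "\<And>y. ?A *v (?A *v (?A *v y)) = - (1\<^sup>2 *\<^sub>R (?A *v y))"
    using assms \<open>a \<noteq> b\<close> by (auto simp: vec_eq_iff nth Omega_mult_vec_nth)
  \<comment> \<open>the flow turns both planes at once; the turn in the (a,b)-plane is then undone\<close>
  have flow: "rodrigues ?A 1 t x = givens a b (cos t) (- sin t) (givens p q (cos t) (- sin t) x)"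
    using assms \<open>a \<noteq> b\<close>
    by (auto simp: vec_eq_iff rodrigues_nth givens_nth nth Omega_mult_vec_nth algebra_simps)
  have "reachable ps x (rodrigues ?A 1 t x)"
    by (rule reachable_rodrigues[OF cube zero_less_one ctrl \<open>0 \<le> t\<close>])
  also have "reachable ps \<dots> (givens a b (cos t) (sin t) (rodrigues ?A 1 t x))"
    by (rule rotatable_reachable(1)[OF ab]) simp
  also have "givens a b (cos t) (sin t) (rodrigues ?A 1 t x) = givens p q (cos t) (- sin t) x"
    unfolding flow using givens_inverse[of "cos t" "- sin t" a b] \<open>a \<noteq> b\<close> by simp
  finally show "reachable ps x (givens p q (cos t) (- sin t) x)" .
qed

context
  fixes i j l :: "'n::finite" and \<alpha> :: real
  assumes distinct: "i \<noteq> j" "j \<noteq> l" "i \<noteq> l" and unit: "\<alpha>\<^sup>2 = 1"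
begin

lemma adjacent_mult_vec_nth:
  "((\<alpha> *\<^sub>R Omega i j + \<beta> *\<^sub>R Omega j l) *v x) $ m =
    (if m = i then \<alpha> * x $ j else if m = j then \<beta> * x $ l - \<alpha> * x $ i
     else if m = l then - \<beta> * x $ j else 0)"
  using distinct
  by (simp add: matrix_vector_mult_add_rdistrib scaleR_matrix_vector_assoc[symmetric] Omega_mult_vec_nth)

lemma adjacent_cube:
  "(\<alpha> *\<^sub>R Omega i j + \<beta> *\<^sub>R Omega j l) *v ((\<alpha> *\<^sub>R Omega i j + \<beta> *\<^sub>R Omega j l) *v
     ((\<alpha> *\<^sub>R Omega i j + \<beta> *\<^sub>R Omega j l) *v y))
   = - ((1 + \<beta>\<^sup>2) *\<^sub>R ((\<alpha> *\<^sub>R Omega i j + \<beta> *\<^sub>R Omega j l) *v y))"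
proof -
  have \<alpha>\<alpha>: "\<alpha> * (\<alpha> * z) = z" for z
    using unit by (simp add: power2_eq_square flip: mult.assoc)
  show ?thesis
    unfolding vec_eq_iff vector_uminus_component vector_scaleR_component adjacent_mult_vec_nth
    using distinct by (auto simp: algebra_simps power2_eq_square \<alpha>\<alpha>)
qed

lemma adjacent_half_turns_compose:
  defines "H \<beta> x \<equiv> x + (2 / (1 + \<beta>\<^sup>2)) *\<^sub>R
     ((\<alpha> *\<^sub>R Omega i j + \<beta> *\<^sub>R Omega j l) *v ((\<alpha> *\<^sub>R Omega i j + \<beta> *\<^sub>R Omega j l) *v x))"
  shows "H 0 (H \<beta> x) = givens i l (2 / (1 + \<beta>\<^sup>2) - 1) (\<alpha> * \<beta> * (2 / (1 + \<beta>\<^sup>2))) x"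
proof -
  define \<gamma> where "\<gamma> = 2 / (1 + \<beta>\<^sup>2)"
  have "1 + \<beta>\<^sup>2 > 0"
    by (simp add: add_pos_nonneg)
  then have \<gamma>2: "\<gamma> * (1 + \<beta>\<^sup>2) = 2"
    unfolding \<gamma>_def by (simp add: field_simps)
  have \<gamma>: "\<gamma> * z + \<beta> * (\<beta> * (\<gamma> * z)) = z * 2" for z
  proof -
    have "\<gamma> * z + \<beta> * (\<beta> * (\<gamma> * z)) = (\<gamma> * (1 + \<beta>\<^sup>2)) * z"
      by (simp add: algebra_simps power2_eq_square)
    then show ?thesis
      unfolding \<gamma>2 by simp
  qed
  have \<alpha>\<alpha>: "\<alpha> * (\<alpha> * z) = z" for z
    using unit by (simp add: power2_eq_square flip: mult.assoc)
  show ?thesis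
    unfolding H_def \<gamma>_def[symmetric] vec_eq_iff givens_nth vector_add_component
      vector_scaleR_component adjacent_mult_vec_nth
    using distinct by (auto simp: algebra_simps \<alpha>\<alpha> \<gamma>)
qed

end

lemma tangent_half_angle:
  fixes c s :: real
  assumes "c\<^sup>2 + s\<^sup>2 = 1" "c \<noteq> -1"
  shows "2 / (1 + (s / (1 + c))\<^sup>2) - 1 = c" "s / (1 + c) * (2 / (1 + (s / (1 + c))\<^sup>2)) = s"
proof -
  have "c\<^sup>2 \<le> 1" using assms(1) by (metis le_add_same_cancel1 zero_le_power2)
  then have pos: "1 + c > 0"
    using assms(2) by (auto simp: abs_square_le_1 abs_le_iff)
  have "s\<^sup>2 = (1 - c) * (1 + c)"
    using assms(1) by (simp add: algebra_simps power2_eq_square)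
  then have "(s / (1 + c))\<^sup>2 = (1 - c) / (1 + c)"
    using pos by (simp add: power_divide power2_eq_square)
  then have "1 + (s / (1 + c))\<^sup>2 = 2 / (1 + c)"
    using pos by (simp add: field_simps)
  then show "2 / (1 + (s / (1 + c))\<^sup>2) - 1 = c" "s / (1 + c) * (2 / (1 + (s / (1 + c))\<^sup>2)) = s"
    using pos by (simp_all add: field_simps)
qed

lemma rotatable_opposite_ends:
  assumes ctrl: "\<And>\<beta>. \<exists>v. sys_matrix ps v = \<alpha> *\<^sub>R Omega i j + \<beta> *\<^sub>R Omega j l"
    and distinct: "i \<noteq> j" "j \<noteq> l" "i \<noteq> l" and unit: "\<alpha>\<^sup>2 = 1"
  shows "rotatable ps i l"
proof -
  define H where "H \<beta> x = x + (2 / (1 + \<beta>\<^sup>2)) *\<^sub>R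
    ((\<alpha> *\<^sub>R Omega i j + \<beta> *\<^sub>R Omega j l) *v ((\<alpha> *\<^sub>R Omega i j + \<beta> *\<^sub>R Omega j l) *v x))"
    for \<beta> x
  \<comment> \<open>\<open>H \<beta>\<close> is the flow for the control value \<open>\<beta>\<close> over half a period\<close>
  have half_period: "reachable ps x (H \<beta> x)" for \<beta> x
  proof -
    define w where "w = sqrt (1 + \<beta>\<^sup>2)"
    have w: "w > 0" "w\<^sup>2 = 1 + \<beta>\<^sup>2"
      unfolding w_def by (simp_all add: add_pos_nonneg)
    obtain v where v: "sys_matrix ps v = \<alpha> *\<^sub>R Omega i j + \<beta> *\<^sub>R Omega j l"
      using ctrl by blast
    have "reachable ps x (rodrigues (\<alpha> *\<^sub>R Omega i j + \<beta> *\<^sub>R Omega j l) w (pi / w) x)"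
      by (rule reachable_rodrigues[OF _ w(1) v])
         (use w(1) in \<open>simp_all add: adjacent_cube[OF distinct unit] w(2)\<close>)
    then show ?thesis
      unfolding H_def rodrigues_half_period[OF less_imp_neq[OF w(1), symmetric]] w(2) .
  qed
  have rotate: "reachable ps x (givens i l c s x)" if "c\<^sup>2 + s\<^sup>2 = 1" "c \<noteq> -1" for c s x
  proof -
    define \<beta> where "\<beta> = \<alpha> * (s / (1 + c))"
    have \<beta>: "\<beta>\<^sup>2 = (s / (1 + c))\<^sup>2" "\<alpha> * \<beta> = s / (1 + c)"
      using unit by (simp_all add: \<beta>_def power_mult_distrib power2_eq_square flip: mult.assoc)
    have "reachable ps x (H \<beta> x)"
      by (rule half_period)
    also have "reachable ps \<dots> (H 0 (H \<beta> x))"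
      by (rule half_period)
    also have "H 0 (H \<beta> x) = givens i l c s x"
      using adjacent_half_turns_compose[OF distinct unit, where \<beta>=\<beta> and x=x]
      unfolding H_def \<beta> tangent_half_angle[OF that] .
    finally show ?thesis .
  qed
  show ?thesis
    unfolding rotatable_def
  proof (intro conjI allI impI)
    fix c s x assume unit_cs: "c\<^sup>2 + s\<^sup>2 = (1::real)"
    show "reachable ps x (givens i l c s x)"
    proof (cases "c = -1")
      case True
      with unit_cs have "s = 0" by simp
      have "reachable ps x (givens i l 0 1 x)"
        by (rule rotate) simp_all
      also have "reachable ps \<dots> (givens i l 0 1 (givens i l 0 1 x))"
        by (rule rotate) simp_all
      also have "givens i l 0 1 (givens i l 0 1 x) = givens i l c s x"
        using True \<open>s = 0\<close> distinct by (auto simp: vec_eq_iff givens_nth)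
      finally show ?thesis .
    qed (use rotate unit_cs in blast)
  qed (fact \<open>i \<noteq> l\<close>)
qed

lemma Omega_oriented:
  assumes "{a, b} = {i, j}" "i \<noteq> j"
  obtains \<sigma> :: real where "\<sigma>\<^sup>2 = 1" "Omega a b = \<sigma> *\<^sub>R Omega i j"
proof -
  from assms have "a = i \<and> b = j \<or> a = j \<and> b = i"
    by (auto simp: doubleton_eq_iff)
  then show ?thesis
  proof
    assume "a = i \<and> b = j"
    then show ?thesis
      using that[of 1] by simp
  next
    assume "a = j \<and> b = i"
    then show ?thesis
      using that[of "-1"] Omega_swap[of i j] by simp
  qed
qed

lemma rotatable_adjacent_edge:
  assumes ab: "rotatable ps a b"
    and ctrl: "\<And>c. \<exists>v. sys_matrix ps v = Omega a b + c *\<^sub>R Omega p q"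
    and ij: "{a, b} = {i, j}" and jl: "{p, q} = {j, l}"
    and distinct: "i \<noteq> j" "j \<noteq> l" "i \<noteq> l"
  shows "rotatable ps p q"
proof -
  obtain \<sigma> where \<sigma>: "\<sigma>\<^sup>2 = 1" "Omega a b = \<sigma> *\<^sub>R Omega i j"
    using Omega_oriented[OF ij distinct(1)] by blast
  obtain \<tau> where \<tau>: "\<tau>\<^sup>2 = 1" "Omega p q = \<tau> *\<^sub>R Omega j l"
    using Omega_oriented[OF jl distinct(2)] by blast
  have "rotatable ps i l"
  proof (rule rotatable_opposite_ends[OF _ distinct \<sigma>(1)])
    fix \<beta>
    obtain v where "sys_matrix ps v = Omega a b + (\<tau> * \<beta>) *\<^sub>R Omega p q"
      using ctrl by blast
    moreover have "(\<tau> * \<beta>) *\<^sub>R Omega p q = \<beta> *\<^sub>R Omega j l"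
      using \<tau> by (simp add: mult.commute mult.left_commute power2_eq_square)
    ultimately show "\<exists>v. sys_matrix ps v = \<sigma> *\<^sub>R Omega i j + \<beta> *\<^sub>R Omega j l"
      using \<sigma>(2) by auto
  qed
  moreover have "rotatable ps j i"
    using ab ij by (auto simp: doubleton_eq_iff intro: rotatable_sym)
  ultimately have "rotatable ps j l"
    using rotatable_trans distinct(2) by blast
  then show ?thesis
    using jl by (auto simp: doubleton_eq_iff intro: rotatable_sym)
qed

lemma rotatable_edge:
  assumes loopless: "\<forall>(i, j) \<in> set ps. i \<noteq> j" and pq: "(p, q) \<in> set ps"
  shows "rotatable ps p q"
proof -
  obtain k where k: "k < length ps" "ps ! k = (p, q)"
    using pq by (auto simp: in_set_conv_nth)
  obtain a b where ab: "ps ! 0 = (a, b)"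
    by fastforce
  have "(a, b) \<in> set ps"
    using nth_mem[of 0 ps] ab k(1) by (metis gr_zeroI not_less_zero)
  then have "a \<noteq> b" "p \<noteq> q"
    using loopless pq by auto
  have drift: "rotatable ps a b"
    using rotatable_if_drift[OF sys_matrix_zero_control[of ps]] ab \<open>a \<noteq> b\<close> by simp
  show ?thesis
  proof (cases "{p, q} = {a, b}")
    case True
    then show ?thesis
      using drift by (auto simp: doubleton_eq_iff intro: rotatable_sym)
  next
    case False
    with k ab have "k \<in> {1..<length ps}"
      by (cases "k = 0") auto
    from sys_matrix_single_control[OF this] k ab
    have ctrl: "\<exists>v. sys_matrix ps v = Omega a b + c *\<^sub>R Omega p q" for c
      by (intro exI[of _ "\<lambda>j. if j = k then c else 0"]) simp
    consider "p \<notin> {a, b}" "q \<notin> {a, b}" | "p \<in> {a, b}" | "q \<in> {a, b}"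
      by blast
    then show ?thesis
    proof cases
      case 1
      obtain v where "sys_matrix ps v = Omega a b + Omega p q"
        using ctrl[of 1] by auto
      from rotatable_disjoint_edge[OF this drift \<open>p \<noteq> q\<close> 1] show ?thesis .
    next
      case 2
      define i where "i = (if p = a then b else a)"
      have i: "{a, b} = {i, p}" "i \<noteq> p" "i \<noteq> q"
        using 2 False \<open>a \<noteq> b\<close> \<open>p \<noteq> q\<close> by (auto simp: i_def)
      from rotatable_adjacent_edge[OF drift ctrl i(1) refl i(2) \<open>p \<noteq> q\<close> i(3)] show ?thesis .
    next
      case 3
      define i where "i = (if q = a then b else a)"
      have i: "{a, b} = {i, q}" "{p, q} = {q, p}" "i \<noteq> q" "i \<noteq> p"
        using 3 False \<open>a \<noteq> b\<close> \<open>p \<noteq> q\<close> by (auto simp: i_def)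
      from rotatable_adjacent_edge[OF drift ctrl i(1,2,3) \<open>p \<noteq> q\<close>[symmetric] i(4)] show ?thesis .
    qed
  qed
qed

lemma rotatable_if_connected:
  assumes loopless: "\<forall>(i, j) \<in> set ps. i \<noteq> j"
    and path: "(r, v) \<in> (set ps \<union> (set ps)\<inverse>)\<^sup>*" and "v \<noteq> r"
  shows "rotatable ps r v"
  using path \<open>v \<noteq> r\<close>
proof (induction rule: rtrancl_induct)
  case (step y z)
  have "rotatable ps y z"
    using step(2) rotatable_edge[OF loopless] rotatable_sym by blast
  then show ?case
    using step rotatable_trans by (cases "y = r") auto
qed simp

section \<open>Sufficiency\<close>

lemma givens_eliminate:
  assumes "a \<noteq> b"
  obtains c s where "c\<^sup>2 + s\<^sup>2 = 1" "givens a b c s y $ b = 0"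
    "(givens a b c s y $ a)\<^sup>2 = (y $ a)\<^sup>2 + (y $ b)\<^sup>2"
proof (cases "(y $ a)\<^sup>2 + (y $ b)\<^sup>2 = 0")
  case True
  then have "y $ a = 0" "y $ b = 0"
    by (simp_all add: sum_power2_eq_zero_iff)
  then show ?thesis
    using that[of 1 0] assms by (simp add: givens_nth)
next
  case False
  define \<rho> where "\<rho> = sqrt ((y $ a)\<^sup>2 + (y $ b)\<^sup>2)"
  have "(y $ a)\<^sup>2 + (y $ b)\<^sup>2 > 0"
    using False by (metis add_nonneg_nonneg order_le_less zero_le_power2)
  then have \<rho>: "\<rho> > 0" "\<rho>\<^sup>2 = (y $ a)\<^sup>2 + (y $ b)\<^sup>2"
    by (simp_all add: \<rho>_def)
  show ?thesis
  proof (rule that[of "y $ a / \<rho>" "- (y $ b) / \<rho>"])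
    have "(y $ a / \<rho>)\<^sup>2 + (- (y $ b) / \<rho>)\<^sup>2 = ((y $ a)\<^sup>2 + (y $ b)\<^sup>2) / \<rho>\<^sup>2"
      by (simp add: power_divide add_divide_distrib)
    also have "\<dots> = 1"
      unfolding \<rho>(2)[symmetric] using \<rho>(1) by simp
    finally show "(y $ a / \<rho>)\<^sup>2 + (- (y $ b) / \<rho>)\<^sup>2 = 1" .
    show "givens a b (y $ a / \<rho>) (- (y $ b) / \<rho>) y $ b = 0"
      using assms by (simp add: givens_nth field_simps)
    have "givens a b (y $ a / \<rho>) (- (y $ b) / \<rho>) y $ a = \<rho>\<^sup>2 / \<rho>"
      unfolding \<rho>(2) by (simp add: givens_nth power2_eq_square add_divide_distrib)
    then show "(givens a b (y $ a / \<rho>) (- (y $ b) / \<rho>) y $ a)\<^sup>2 = (y $ a)\<^sup>2 + (y $ b)\<^sup>2"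
      using \<rho> by (simp add: power2_eq_square)
  qed
qed

lemma reachable_sweep:
  assumes rot: "\<And>w. w \<noteq> r \<Longrightarrow> rotatable ps r w" and "finite W" "r \<notin> W"
  shows "\<exists>y. reachable ps x y \<and> reachable ps y x \<and> (\<forall>w\<in>W. y $ w = 0)
    \<and> (\<forall>m. m \<notin> W \<longrightarrow> m \<noteq> r \<longrightarrow> y $ m = x $ m) \<and> (y $ r)\<^sup>2 = (x $ r)\<^sup>2 + (\<Sum>w\<in>W. (x $ w)\<^sup>2)"
  using assms(2,3)
proof (induction W rule: finite_induct)
  case empty
  show ?case
    using reachable_refl by auto
next
  case (insert w W)
  then obtain y where y: "reachable ps x y" "reachable ps y x" "\<forall>v\<in>W. y $ v = 0"
      "\<forall>m. m \<notin> W \<longrightarrow> m \<noteq> r \<longrightarrow> y $ m = x $ m" "(y $ r)\<^sup>2 = (x $ r)\<^sup>2 + (\<Sum>w\<in>W. (x $ w)\<^sup>2)"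
    by auto
  have "w \<noteq> r"
    using insert by auto
  obtain c s where cs: "c\<^sup>2 + s\<^sup>2 = 1" "givens r w c s y $ w = 0"
      "(givens r w c s y $ r)\<^sup>2 = (y $ r)\<^sup>2 + (y $ w)\<^sup>2"
    using givens_eliminate[OF \<open>w \<noteq> r\<close>[symmetric]] by blast
  have "rotatable ps r w"
    using rot \<open>w \<noteq> r\<close> by blast
  note step = rotatable_reachable[OF this cs(1)]
  show ?case
  proof (intro exI[of _ "givens r w c s y"] conjI ballI allI impI)
    show "reachable ps x (givens r w c s y)"
      using y(1) step(1) by (rule reachable_trans)
    show "reachable ps (givens r w c s y) x"
      using step(2) y(2) by (rule reachable_trans)
    show "givens r w c s y $ v = 0" if "v \<in> insert w W" for v
      using that cs(2) y(3) insert.hyps(2) insert.prems by (auto simp: givens_nth)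
    show "givens r w c s y $ m = x $ m" if "m \<notin> insert w W" "m \<noteq> r" for m
      using that y(4) by (simp add: givens_nth)
    show "(givens r w c s y $ r)\<^sup>2 = (x $ r)\<^sup>2 + (\<Sum>w\<in>insert w W. (x $ w)\<^sup>2)"
      using cs(3) y(4,5) insert.hyps \<open>w \<noteq> r\<close> by simp
  qed
qed

lemma sum_square_nth_eq_1:
  assumes "norm (x :: real^'n) = 1"
  shows "(\<Sum>i\<in>UNIV. (x $ i)\<^sup>2) = 1"
proof -
  have "x \<bullet> x = 1"
    using assms by (simp add: dot_square_norm)
  then show ?thesis
    by (simp add: inner_vec_def power2_eq_square)
qed

lemma reachable_axis:
  assumes rot: "\<And>w. w \<noteq> r \<Longrightarrow> rotatable ps r w" and card: "CARD('n) \<ge> 2"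
    and x: "norm (x :: real^'n) = 1"
  shows "reachable ps x (axis r 1)" "reachable ps (axis r 1) x"
proof -
  obtain y where y: "reachable ps x y" "reachable ps y x" "\<forall>w\<in>UNIV - {r}. y $ w = 0"
      "(y $ r)\<^sup>2 = (x $ r)\<^sup>2 + (\<Sum>w\<in>UNIV - {r}. (x $ w)\<^sup>2)"
    using reachable_sweep[OF rot, of "UNIV - {r}" x] by auto
  have "(y $ r)\<^sup>2 = 1"
    using y(4) sum_square_nth_eq_1[OF x] sum.remove[of UNIV r "\<lambda>i. (x $ i)\<^sup>2"] by simp
  then consider "y $ r = 1" | "y $ r = -1"
    by (metis power2_eq_1_iff)
  then have "reachable ps y (axis r 1) \<and> reachable ps (axis r 1) y"
  proof cases
    case 1
    then have "y = axis r 1"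
      using y(3) by (auto simp: vec_eq_iff axis_def)
    then show ?thesis
      using reachable_refl by simp
  next
    case 2
    have "\<not> UNIV \<subseteq> {r}"
    proof
      assume "UNIV \<subseteq> {r}"
      then have "CARD('n) \<le> card {r}"
        by (intro card_mono) auto
      then show False
        using card by simp
    qed
    then obtain w where "w \<noteq> r"
      by blast
    then have "givens r w (-1) 0 y = axis r 1"
      using y(3) 2 by (auto simp: vec_eq_iff axis_def givens_nth)
    then show ?thesis
      using rotatable_reachable[OF rot[OF \<open>w \<noteq> r\<close>], of "-1" 0 y] by simp
  qed
  then show "reachable ps x (axis r 1)" "reachable ps (axis r 1) x"
    using reachable_trans[OF y(1)] reachable_trans[OF _ y(2)] by blast+
qed

lemma controllable_on_sphereI:
  fixes ps :: "('n::finite \<times> 'n) list"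
  assumes "\<And>r w. w \<noteq> r \<Longrightarrow> rotatable ps r w" and "CARD('n) \<ge> 2"
  shows "controllable_on_sphere ps"
  unfolding controllable_on_sphere_def
proof (intro allI impI)
  fix x0 x1 :: "real^'n"
  assume "norm x0 = 1" "norm x1 = 1"
  from reachable_axis(1)[OF assms this(1)] reachable_axis(2)[OF assms this(2)]
  show "reachable ps x0 x1"
    by (rule reachable_trans)
qed

section \<open>Necessity\<close>

lemma mult_vec_sum_nth: "((\<Sum>k\<in>K. f k) *v y) $ a = (\<Sum>k\<in>K. (f k *v y) $ a)"
  by (induction K rule: infinite_finite_induct) (simp_all add: matrix_vector_mult_add_rdistrib)

lemma Omega_form_vanishes:
  assumes "p \<in> D \<longleftrightarrow> q \<in> D"
  shows "(\<Sum>a\<in>D. y $ a * (Omega p q *v y) $ a) = 0"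
proof -
  have "(\<Sum>a\<in>D. y $ a * (Omega p q *v y) $ a)
      = (\<Sum>a\<in>D. if a = p then y $ p * y $ q else 0) - (\<Sum>a\<in>D. if a = q then y $ q * y $ p else 0)"
    unfolding Omega_mult_vec_nth sum_subtractf[symmetric] by (rule sum.cong) auto
  also have "\<dots> = 0"
    using assms by (simp add: mult.commute)
  finally show ?thesis .
qed

lemma sys_matrix_form_vanishes:
  assumes closed: "\<And>p q. (p, q) \<in> set ps \<Longrightarrow> p \<in> D \<longleftrightarrow> q \<in> D" and "ps \<noteq> []"
  shows "(\<Sum>a\<in>D. y $ a * (sys_matrix ps v *v y) $ a) = 0"
proof -
  define F where "F k = (\<Sum>a\<in>D. y $ a * (Omega (fst (ps!k)) (snd (ps!k)) *v y) $ a)" for k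
  have F: "F k = 0" if "k < length ps" for k
    unfolding F_def using that by (intro Omega_form_vanishes closed) simp
  have "(sys_matrix ps v *v y) $ a = (Omega (fst (ps!0)) (snd (ps!0)) *v y) $ a
      + (\<Sum>k\<in>{1..<length ps}. v k * (Omega (fst (ps!k)) (snd (ps!k)) *v y) $ a)" for a
    by (simp add: sys_matrix_def matrix_vector_mult_add_rdistrib mult_vec_sum_nth
        flip: scaleR_matrix_vector_assoc)
  then have "(\<Sum>a\<in>D. y $ a * (sys_matrix ps v *v y) $ a) = F 0 + (\<Sum>k\<in>{1..<length ps}. v k * F k)"
    unfolding F_def
    by (simp add: distrib_left sum.distrib sum_distrib_left sum.swap[of _ D] mult.left_commute)
  also have "\<dots> = 0"
    using F \<open>ps \<noteq> []\<close> by simp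
  finally show ?thesis .
qed

lemma trajectory_preserves_mass:
  assumes closed: "\<And>p q. (p, q) \<in> set ps \<Longrightarrow> p \<in> D \<longleftrightarrow> q \<in> D" and "ps \<noteq> []"
    and traj: "is_trajectory ps T u x" and "T \<ge> 0"
  shows "(\<Sum>a\<in>D. (x T $ a)\<^sup>2) = (\<Sum>a\<in>D. (x 0 $ a)\<^sup>2)"
proof -
  obtain S where S: "finite S" and cont: "continuous_on {0..T} x"
    and deriv: "\<And>t. t \<in> {0<..<T} - S \<Longrightarrow> (x has_vector_derivative (sys_matrix ps (u t) *v x t)) (at t)"
    using traj unfolding is_trajectory_def by blast
  define f where "f t = (\<Sum>a\<in>D. (x t $ a)\<^sup>2)" for t
  have deriv_f: "(f has_vector_derivative 0) (at t)" if t: "t \<in> {0<..<T} - S" for t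
  proof -
    define X where "X = sys_matrix ps (u t) *v x t"
    have "((\<lambda>s. x s $ a) has_real_derivative X $ a) (at t)" for a
      using bounded_linear.has_vector_derivative[OF bounded_linear_vec_nth deriv[OF t]]
      unfolding has_real_derivative_iff_has_vector_derivative X_def by simp
    then have "(f has_real_derivative (\<Sum>a\<in>D. 2 * (x t $ a * X $ a))) (at t)"
      unfolding f_def by (auto intro!: derivative_eq_intros simp: mult.commute)
    moreover have "(\<Sum>a\<in>D. 2 * (x t $ a * X $ a)) = 0"
      using sys_matrix_form_vanishes[OF closed \<open>ps \<noteq> []\<close>, of "x t" "u t"]
      unfolding X_def by (simp flip: sum_distrib_left)
    ultimately show ?thesis
      unfolding has_real_derivative_iff_has_vector_derivative by simp
  qed
  have "continuous_on {0..T} f"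
    unfolding f_def by (intro continuous_intros continuous_on_component cont)
  from fundamental_theorem_of_calculus_interior_strong[OF S \<open>T \<ge> 0\<close> deriv_f this]
  have "f T = f 0"
    using has_integral_unique[OF _ has_integral_0] by fastforce
  then show ?thesis
    unfolding f_def .
qed

lemma controllable_imp_connected:
  assumes "ps \<noteq> []" and ctrl: "controllable_on_sphere ps"
  shows "graph_connected ps"
proof (rule ccontr)
  let ?E = "set ps \<union> (set ps)\<inverse>"
  assume "\<not> graph_connected ps"
  then obtain v w where vw: "(v, w) \<notin> ?E\<^sup>*"
    unfolding graph_connected_def by blast
  define D where "D = {a. (v, a) \<notin> ?E\<^sup>*}"
  have closed: "p \<in> D \<longleftrightarrow> q \<in> D" if "(p, q) \<in> set ps" for p q
    using that rtrancl_into_rtrancl[of v p ?E q] rtrancl_into_rtrancl[of v q ?E p]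
    unfolding D_def by blast
  obtain T u x where "T \<ge> 0" "is_trajectory ps T u x" "x 0 = axis v 1" "x T = axis w 1"
    using ctrl unfolding controllable_on_sphere_def reachable_def by (metis norm_axis_1)
  from trajectory_preserves_mass[OF closed \<open>ps \<noteq> []\<close> this(2,1)]
  have "(\<Sum>a\<in>D. (axis w 1 $ a)\<^sup>2) = (\<Sum>a\<in>D. (axis v 1 $ a)\<^sup>2 :: real)"
    using \<open>x 0 = axis v 1\<close> \<open>x T = axis w 1\<close> by simp
  moreover have "v \<notin> D" "w \<in> D"
    using vw unfolding D_def by auto
  ultimately show False
    by (simp add: axis_def if_distrib[where f="\<lambda>z. z\<^sup>2"] cong: if_cong)
qed

theorem proposition1:
  fixes ps :: "('n::finite \<times> 'n) list"
  assumes "CARD('n) \<ge> 2"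
    and "ps \<noteq> []"
    and "\<forall>(i, j) \<in> set ps. i \<noteq> j"
  shows "controllable_on_sphere ps \<longleftrightarrow> graph_connected ps"
proof
  assume "controllable_on_sphere ps"
  then show "graph_connected ps"
    using controllable_imp_connected assms(2) by blast
next
  assume "graph_connected ps"
  then have "rotatable ps r w" if "w \<noteq> r" for r w
    using rotatable_if_connected[OF assms(3)] that unfolding graph_connected_def by blast
  then show "controllable_on_sphere ps"
    using controllable_on_sphereI assms(1) by blast
qed

end
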